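(* Let $k$ be a field of characteristic $0$ containing a primitive fifth root of unity, let $a,b\in k$ be such that the threefold $xu^2+2yuv+zv^2+2z^2u+2x^2v+ay^3+bxyz=0$ in $\mathbb{P}^4$ is smooth, and let $\mathcal{D}_{a,b}$ be the genus four curve with affine model $$(T_1-2)(T_1^2+T_1-1)^2+(a+b+4-10T_1+5T_1^3)w^2+(-2-b+5T_1)w^4=0,$$ with the degree four map $\mathcal{D}_{a,b}\to\mathbb{P}^1$, $(T_1,w)\mapsto T_1$. Assume this map is not a Galois cover and let $\widetilde{\mathcal{D}}_{a,b}\to\mathbb{P}^1$ be its Galois closure (normalization). Then the double cover $\widetilde{\mathcal{D}}_{a,b}\to\mathcal{D}_{a,b}$ is given by the function field extension $k(\widetilde{\mathcal{D}}_{a,b})=k(\mathcal{D}_{a,b})(t)$ with $$t^2=\frac{T_1-2}{5T_1-b-2}.$$ *)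

theory Defs
  imports "HOL-Computational_Algebra.Polynomial"
begin

definition subfield :: "'a::field set \<Rightarrow> bool" where
  "subfield S \<longleftrightarrow> 0 \<in> S \<and> 1 \<in> S \<and>
     (\<forall>x\<in>S. \<forall>y\<in>S. x + y \<in> S \<and> x - y \<in> S \<and> x * y \<in> S) \<and>
     (\<forall>x\<in>S. inverse x \<in> S)"

definition gen_field :: "'a::field set \<Rightarrow> 'a set" where
  "gen_field X = \<Inter>{S. subfield S \<and> X \<subseteq> S}"

definition embedding_over :: "'a::field set \<Rightarrow> 'a set \<Rightarrow> ('a \<Rightarrow> 'a) \<Rightarrow> bool" where
  "embedding_over F K \<sigma> \<longleftrightarrow> (\<forall>x\<in>F. \<sigma> x = x) \<and> \<sigma> 1 = 1 \<and>
     (\<forall>x\<in>K. \<forall>y\<in>K. \<sigma> (x + y) = \<sigma> x + \<sigma> y \<and> \<sigma> (x * y) = \<sigma> x * \<sigma> y)"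

text \<open>Galois (normal) closure of K/F inside the ambient algebraically closed field:
  the compositum of all conjugates of K over F.\<close>
definition galois_closure :: "'a::field set \<Rightarrow> 'a set \<Rightarrow> 'a set" where
  "galois_closure F K = gen_field (\<Union>{\<sigma> ` K | \<sigma>. embedding_over F K \<sigma>})"

text \<open>K/F is Galois (char 0, so separable): every F-embedding maps K into K.\<close>
definition galois_ext :: "'a::field set \<Rightarrow> 'a set \<Rightarrow> bool" where
  "galois_ext F K \<longleftrightarrow> (\<forall>\<sigma>. embedding_over F K \<sigma> \<longrightarrow> \<sigma> ` K \<subseteq> K)"

definition transcendental_over :: "'a::field set \<Rightarrow> 'a \<Rightarrow> bool" where
  "transcendental_over F x \<longleftrightarrow>
     (\<forall>p. p \<noteq> 0 \<longrightarrow> (\<forall>i. coeff p i \<in> F) \<longrightarrow> poly p x \<noteq> 0)"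

text \<open>The cubic threefold x u^2 + 2 y u v + z v^2 + 2 z^2 u + 2 x^2 v + a y^3 + b x y z = 0
  and its partial derivatives (written out).\<close>
definition cubicF :: "'a::field \<Rightarrow> 'a \<Rightarrow> 'a \<Rightarrow> 'a \<Rightarrow> 'a \<Rightarrow> 'a \<Rightarrow> 'a \<Rightarrow> 'a" where
  "cubicF a b x y z u v = x*u^2 + 2*y*u*v + z*v^2 + 2*z^2*u + 2*x^2*v + a*y^3 + b*x*y*z"

definition smooth_threefold :: "'a::field \<Rightarrow> 'a \<Rightarrow> bool" where
  "smooth_threefold a b \<longleftrightarrow>
     \<not> (\<exists>x y z u v. (x, y, z, u, v) \<noteq> (0, 0, 0, 0, 0) \<and>
          cubicF a b x y z u v = 0 \<and>
          u^2 + 4*x*v + b*y*z = 0 \<and>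
          2*u*v + 3*a*y^2 + b*x*z = 0 \<and>
          v^2 + 4*z*u + b*x*y = 0 \<and>
          2*x*u + 2*y*v + 2*z^2 = 0 \<and>
          2*y*u + 2*z*v + 2*x^2 = 0)"

definition curveD :: "'a::field \<Rightarrow> 'a \<Rightarrow> 'a \<Rightarrow> 'a \<Rightarrow> 'a" where
  "curveD a b T1 w = (T1 - 2) * (T1^2 + T1 - 1)^2 + (a + b + 4 - 10*T1 + 5*T1^3) * w^2
                     + (-2 - b + 5*T1) * w^4"

end

theory Submission
  imports Defs
begin

(* Over F = k(T1) the curve equation is the biquadratic A w^4 + B w^2 + C = 0 with
   A = 5 T1 - b - 2 and C = (T1 - 2) (T1^2 + T1 - 1)^2, so C/A = (P t)^2 with P = T1^2 + T1 - 1
   and t^2 = (T1 - 2)/A. Hence the four roots are w, -w, P t/w, -P t/w. An F-embedding of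
   F(w) is determined by the image of w; since F(w)/F is not Galois some embedding sends w
   outside F(w), i.e. to +-P t/w. So t is not in F(w), and the normal closure, generated by
   all images of w, is F(w, P t/w) = F(w, t). *)

lemma subfield_zero: "subfield S \<Longrightarrow> 0 \<in> S"
  and subfield_one: "subfield S \<Longrightarrow> 1 \<in> S"
  and subfield_add: "subfield S \<Longrightarrow> x \<in> S \<Longrightarrow> y \<in> S \<Longrightarrow> x + y \<in> S"
  and subfield_diff: "subfield S \<Longrightarrow> x \<in> S \<Longrightarrow> y \<in> S \<Longrightarrow> x - y \<in> S"
  and subfield_mult: "subfield S \<Longrightarrow> x \<in> S \<Longrightarrow> y \<in> S \<Longrightarrow> x * y \<in> S"
  and subfield_inverse: "subfield S \<Longrightarrow> x \<in> S \<Longrightarrow> inverse x \<in> S"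
  by (simp_all add: subfield_def)

lemma subfield_uminus: "subfield S \<Longrightarrow> x \<in> S \<Longrightarrow> - x \<in> S"
  by (metis diff_0 subfield_diff subfield_zero)

lemma subfield_divide: "subfield S \<Longrightarrow> x \<in> S \<Longrightarrow> y \<in> S \<Longrightarrow> x / y \<in> S"
  by (simp add: divide_inverse subfield_mult subfield_inverse)

lemma subfield_power: "subfield S \<Longrightarrow> x \<in> S \<Longrightarrow> x ^ n \<in> S"
  by (induction n) (auto intro: subfield_one subfield_mult)

lemma subfield_numeral: "subfield S \<Longrightarrow> (numeral n :: 'a::field) \<in> S"
  by (induction n rule: num_induct) (simp add: subfield_one, metis numeral_inc subfield_add subfield_one)

lemmas subfield_closed = subfield_zero subfield_one subfield_add subfield_diff subfield_mult
  subfield_uminus subfield_divide subfield_power subfield_numeral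

lemma subfield_poly: "subfield S \<Longrightarrow> x \<in> S \<Longrightarrow> \<forall>i. coeff p i \<in> S \<Longrightarrow> poly p x \<in> S"
proof (induction p)
  case (pCons a p)
  then show ?case
    by (metis coeff_pCons_0 coeff_pCons_Suc poly_pCons subfield_add subfield_mult)
qed (simp add: subfield_zero)

lemma gen_field_subfield: "subfield (gen_field X)"
  unfolding gen_field_def subfield_def by blast

lemma gen_field_subset: "X \<subseteq> gen_field X"
  unfolding gen_field_def by blast

lemma gen_field_minimal: "subfield S \<Longrightarrow> X \<subseteq> S \<Longrightarrow> gen_field X \<subseteq> S"
  unfolding gen_field_def by blast

lemma gen_field_mono: "X \<subseteq> Y \<Longrightarrow> gen_field X \<subseteq> gen_field Y"
  by (meson gen_field_minimal gen_field_subfield gen_field_subset order_trans)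

lemma transcendental_over_quadratic_nonzero:
  assumes "transcendental_over k x" "subfield k" "a0 \<in> k" "a1 \<in> k" "a2 \<in> k" "a1 \<noteq> 0 \<or> a2 \<noteq> 0"
  shows "a0 + a1 * x + a2 * x ^ 2 \<noteq> 0"
proof -
  have "\<forall>i. coeff [:a0, a1, a2:] i \<in> k"
    using assms(2-5) by (auto simp: coeff_pCons subfield_zero split: nat.split)
  moreover have "[:a0, a1, a2:] \<noteq> 0" using assms(6) by auto
  ultimately have "poly [:a0, a1, a2:] x \<noteq> 0"
    using assms(1) unfolding transcendental_over_def by blast
  then show ?thesis by (simp add: algebra_simps power2_eq_square)
qed

context
  fixes F K :: "'a::field set" and \<sigma> :: "'a \<Rightarrow> 'a"
  assumes emb: "embedding_over F K \<sigma>" and K: "subfield K"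
begin

lemma embedding_over_add: "x \<in> K \<Longrightarrow> y \<in> K \<Longrightarrow> \<sigma> (x + y) = \<sigma> x + \<sigma> y"
  and embedding_over_mult: "x \<in> K \<Longrightarrow> y \<in> K \<Longrightarrow> \<sigma> (x * y) = \<sigma> x * \<sigma> y"
  and embedding_over_one: "\<sigma> 1 = 1"
  and embedding_over_fixed: "x \<in> F \<Longrightarrow> \<sigma> x = x"
  using emb by (simp_all add: embedding_over_def)

lemma embedding_over_zero: "\<sigma> 0 = 0"
  using embedding_over_add[of 0 0] K by (metis add_0 add_cancel_right_right subfield_zero)

lemma embedding_over_uminus: "x \<in> K \<Longrightarrow> \<sigma> (- x) = - \<sigma> x"
  using embedding_over_add[of x "- x"] K
  by (simp add: subfield_uminus embedding_over_zero eq_neg_iff_add_eq_0 add.commute)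

lemma embedding_over_diff: "x \<in> K \<Longrightarrow> y \<in> K \<Longrightarrow> \<sigma> (x - y) = \<sigma> x - \<sigma> y"
  using embedding_over_add[of x "- y"] K by (simp add: subfield_uminus embedding_over_uminus)

lemma embedding_over_inverse: "x \<in> K \<Longrightarrow> \<sigma> (inverse x) = inverse (\<sigma> x)"
proof (cases "x = 0")
  case False
  assume "x \<in> K"
  then have "\<sigma> x * \<sigma> (inverse x) = 1"
    using embedding_over_mult[of x "inverse x"] K False by (simp add: subfield_inverse embedding_over_one)
  then show ?thesis by (metis inverse_unique)
qed (simp add: embedding_over_zero)

lemma embedding_over_poly:
  assumes "F \<subseteq> K" "x \<in> K" "\<forall>i. coeff p i \<in> F"
  shows "\<sigma> (poly p x) = poly p (\<sigma> x)"
  using assms(3)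
proof (induction p)
  case (pCons a p)
  have "a \<in> F" "\<forall>i. coeff p i \<in> F" using pCons.prems by (metis coeff_pCons_0 coeff_pCons_Suc)+
  moreover have "poly p x \<in> K" using calculation(2) assms(1,2) K by (auto intro: subfield_poly)
  ultimately show ?case
    using pCons.IH assms K by (simp add: embedding_over_add embedding_over_mult subfield_mult
        embedding_over_fixed subset_iff)
qed (simp add: embedding_over_zero)

lemma embedding_over_root:
  "F \<subseteq> K \<Longrightarrow> x \<in> K \<Longrightarrow> \<forall>i. coeff p i \<in> F \<Longrightarrow> poly p x = 0 \<Longrightarrow> poly p (\<sigma> x) = 0"
  using embedding_over_poly embedding_over_zero by metis

end

lemma embedding_over_gen_field_image_subset:
  assumes emb: "embedding_over F (gen_field X) \<sigma>" and N: "subfield N" and X: "\<sigma> ` X \<subseteq> N"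
  shows "\<sigma> ` gen_field X \<subseteq> N"
proof -
  let ?K = "gen_field X"
  note K = gen_field_subfield[of X]
  have "subfield {x \<in> ?K. \<sigma> x \<in> N}"
    unfolding subfield_def using K N
    by (simp add: embedding_over_zero[OF emb K] embedding_over_one[OF emb K]
        embedding_over_add[OF emb K] embedding_over_mult[OF emb K]
        embedding_over_diff[OF emb K] embedding_over_inverse[OF emb K] subfield_closed subfield_inverse)
  moreover have "X \<subseteq> {x \<in> ?K. \<sigma> x \<in> N}" using X gen_field_subset[of X] by auto
  ultimately show ?thesis using gen_field_minimal by blast
qed

lemma embedding_over_adjoin_image_subset:
  assumes "embedding_over (gen_field X) (gen_field (insert w X)) \<sigma>"
    and "subfield N" "X \<subseteq> N" "\<sigma> w \<in> N"
  shows "\<sigma> ` gen_field (insert w X) \<subseteq> N"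
proof (rule embedding_over_gen_field_image_subset[OF assms(1,2)])
  have "\<sigma> x = x" if "x \<in> X" for x
    using that assms(1) gen_field_subset[of X] by (auto simp: embedding_over_def)
  then show "\<sigma> ` insert w X \<subseteq> N" using assms(3,4) by auto
qed

lemma not_galois_ext_adjoin:
  assumes "\<not> galois_ext (gen_field X) (gen_field (insert w X))"
  obtains \<sigma> where "embedding_over (gen_field X) (gen_field (insert w X)) \<sigma>"
    and "\<sigma> w \<notin> gen_field (insert w X)"
proof -
  have "X \<subseteq> gen_field (insert w X)"
    using gen_field_subset[of "insert w X"] by blast
  then show ?thesis
    using assms that embedding_over_adjoin_image_subset[OF _ gen_field_subfield]
    unfolding galois_ext_def by metis
qed

lemma embedding_over_image_subset_galois_closure:
  assumes "embedding_over F K \<sigma>"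
  shows "\<sigma> ` K \<subseteq> galois_closure F K"
proof -
  have "\<sigma> ` K \<subseteq> \<Union>{\<tau> ` K | \<tau>. embedding_over F K \<tau>}" using assms by blast
  then show ?thesis unfolding galois_closure_def using gen_field_subset by (rule order_trans)
qed

lemma subset_galois_closure: "K \<subseteq> galois_closure F K"
  using embedding_over_image_subset_galois_closure[of F K id]
  by (simp add: embedding_over_def)

lemma galois_closure_minimal:
  assumes "subfield N" "\<And>\<sigma>. embedding_over F K \<sigma> \<Longrightarrow> \<sigma> ` K \<subseteq> N"
  shows "galois_closure F K \<subseteq> N"
  unfolding galois_closure_def using assms by (intro gen_field_minimal) auto

lemma biquadratic_roots:
  fixes A B c w x :: "'a::field"
  assumes "A \<noteq> 0" "w \<noteq> 0" "A * w^4 + B * w^2 + A * c^2 = 0" "A * x^4 + B * x^2 + A * c^2 = 0"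
  shows "x = w \<or> x = - w \<or> x = c / w \<or> x = - (c / w)"
proof -
  have "A * ((x - w) * (x + w) * (x * w - c) * (x * w + c))
      = w^2 * (A * x^4 + B * x^2 + A * c^2) - x^2 * (A * w^4 + B * w^2 + A * c^2)"
    by (simp add: algebra_simps power2_eq_square power4_eq_xxxx)
  then have "(x - w) * (x + w) * (x * w - c) * (x * w + c) = 0" using assms by simp
  then have "x = w \<or> x = - w \<or> x * w = c \<or> x * w = - c"
    by (auto simp: eq_neg_iff_add_eq_0 add.commute)
  then show ?thesis using assms(2) by (auto simp: field_simps)
qed

lemma embedding_over_biquadratic_conjugates:
  assumes emb: "embedding_over F K \<sigma>" and subfields: "subfield F" "subfield K" "F \<subseteq> K"
    and coeffs: "A \<in> F" "B \<in> F" "A * c^2 \<in> F" and nonzero: "A \<noteq> 0" "w \<noteq> 0"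
    and w: "w \<in> K" "A * w^4 + B * w^2 + A * c^2 = 0"
  shows "\<sigma> w = w \<or> \<sigma> w = - w \<or> \<sigma> w = c / w \<or> \<sigma> w = - (c / w)"
proof (rule biquadratic_roots[OF nonzero w(2)])
  let ?q = "[:A * c^2, 0, B, 0, A:]"
  have q: "poly ?q x = A * x^4 + B * x^2 + A * c^2" for x
    by (simp add: algebra_simps power2_eq_square power4_eq_xxxx)
  have "\<forall>i. coeff ?q i \<in> F"
    using coeffs subfields(1) by (auto simp: coeff_pCons subfield_zero split: nat.split)
  moreover have "poly ?q w = 0" using w(2) by (simp only: q)
  ultimately have "poly ?q (\<sigma> w) = 0" by (rule embedding_over_root[OF emb subfields(2,3) w(1)])
  then show "A * (\<sigma> w)^4 + B * (\<sigma> w)^2 + A * c^2 = 0" by (simp only: q)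
qed

context
  fixes X :: "'a::field set" and w t A B p :: 'a
  assumes coeffs: "A \<in> gen_field X" "B \<in> gen_field X" "p \<in> gen_field X" "t^2 \<in> gen_field X"
    and nonzero: "A \<noteq> 0" "p \<noteq> 0" "w \<noteq> 0"
    and root: "A * w^4 + B * w^2 + A * (p * t)^2 = 0"
begin

lemma biquadratic_conjugates:
  assumes "embedding_over (gen_field X) (gen_field (insert w X)) \<sigma>"
  shows "\<sigma> w = w \<or> \<sigma> w = - w \<or> \<sigma> w = p * t / w \<or> \<sigma> w = - (p * t / w)"
proof (rule embedding_over_biquadratic_conjugates[OF assms gen_field_subfield gen_field_subfield
      gen_field_mono _ _ _ nonzero(1,3) _ root])
  show "A * (p * t)^2 \<in> gen_field X"
    using coeffs gen_field_subfield[of X] by (simp add: power_mult_distrib subfield_closed)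
qed (use coeffs gen_field_subset[of "insert w X"] in auto)

lemma galois_closure_biquadratic_subset:
  "galois_closure (gen_field X) (gen_field (insert w X)) \<subseteq> gen_field (insert t (insert w X))"
  (is "_ \<subseteq> ?M")
proof (rule galois_closure_minimal[OF gen_field_subfield])
  fix \<sigma> assume emb: "embedding_over (gen_field X) (gen_field (insert w X)) \<sigma>"
  have M: "X \<subseteq> ?M" "w \<in> ?M" "t \<in> ?M" "p \<in> ?M"
    using gen_field_subset[of "insert t (insert w X)"] coeffs(3) gen_field_mono[of X "insert t (insert w X)"]
    by auto
  then have "\<sigma> w \<in> ?M"
    using biquadratic_conjugates[OF emb] gen_field_subfield[of "insert t (insert w X)"]
    by (auto simp: subfield_closed)
  then show "\<sigma> ` gen_field (insert w X) \<subseteq> ?M"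
    using embedding_over_adjoin_image_subset[OF emb gen_field_subfield M(1)] by blast
qed

lemma galois_closure_biquadratic:
  defines "F \<equiv> gen_field X" and "K \<equiv> gen_field (insert w X)"
  assumes not_galois: "\<not> galois_ext F K"
  shows "t \<notin> K" and "galois_closure F K = gen_field (insert t (insert w X))"
proof -
  let ?G = "galois_closure F K"
  have K: "subfield K" "w \<in> K" "p \<in> K"
    unfolding K_def using gen_field_subfield gen_field_subset[of "insert w X"] coeffs(3)
      gen_field_mono[of X "insert w X"] by auto
  obtain \<sigma>0 where emb0: "embedding_over F K \<sigma>0" and outside: "\<sigma>0 w \<notin> K"
    using not_galois_ext_adjoin not_galois unfolding F_def K_def by blast
  have \<sigma>0w: "\<sigma>0 w = p * t / w \<or> \<sigma>0 w = - (p * t / w)"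
    using biquadratic_conjugates[OF emb0[unfolded F_def K_def]] outside K(2)
      subfield_uminus[OF K(1,2)] unfolding K_def by auto
  show "t \<notin> K"
  proof
    assume "t \<in> K"
    then have "p * t / w \<in> K" using K by (simp add: subfield_closed)
    then show False using \<sigma>0w outside subfield_uminus[OF K(1)] by auto
  qed
  have G: "subfield ?G" "K \<subseteq> ?G" "\<sigma>0 w \<in> ?G"
    using gen_field_subfield subset_galois_closure embedding_over_image_subset_galois_closure[OF emb0] K(2)
    unfolding galois_closure_def by auto
  have "t = \<sigma>0 w * w / p \<or> t = - (\<sigma>0 w * w / p)"
    using \<sigma>0w nonzero by (auto simp: field_simps)
  then have "t \<in> ?G"
    using G K by (auto intro!: subfield_closed)
  then have "gen_field (insert t (insert w X)) \<subseteq> ?G"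
    using G gen_field_subset[of "insert w X"] K unfolding K_def by (intro gen_field_minimal) auto
  then show "?G = gen_field (insert t (insert w X))"
    using galois_closure_biquadratic_subset unfolding F_def K_def by blast
qed

end

lemma curveD_biquadratic:
  "curveD a b T1 w = (5 * T1 - b - 2) * w^4 + (a + b + 4 - 10 * T1 + 5 * T1^3) * w^2
     + (T1 - 2) * (T1^2 + T1 - 1)^2"
  unfolding curveD_def by (simp add: algebra_simps)

theorem proposition3p5:
  fixes k :: "'a :: {alg_closed_field, field_char_0} set"
    and a b T1 w :: 'a
  assumes k_field: "subfield k"
    and root5: "\<exists>\<zeta>\<in>k. \<zeta> ^ 5 = 1 \<and> \<zeta> \<noteq> 1"
    and ab: "a \<in> k" "b \<in> k"
    and smooth: "smooth_threefold a b"
    and T1_trans: "transcendental_over k T1"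
    and curve: "curveD a b T1 w = 0"
    and deg4: "\<forall>p. p \<noteq> 0 \<longrightarrow> (\<forall>i. coeff p i \<in> gen_field (k \<union> {T1})) \<longrightarrow>
                   degree p < 4 \<longrightarrow> poly p w \<noteq> 0"
    and not_galois: "\<not> galois_ext (gen_field (k \<union> {T1})) (gen_field (k \<union> {T1, w}))"
  shows "\<exists>t. t ^ 2 = (T1 - 2) / (5 * T1 - b - 2) \<and>
             t \<notin> gen_field (k \<union> {T1, w}) \<and>
             galois_closure (gen_field (k \<union> {T1})) (gen_field (k \<union> {T1, w}))
               = gen_field (k \<union> {T1, w, t})"
proof -
  \<comment> \<open>\<open>root5\<close>, \<open>smooth\<close> and \<open>deg4\<close> only fix the geometric setting; the argument does not use them.\<close>
  let ?F = "gen_field (k \<union> {T1})"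
  define A where "A = 5 * T1 - b - 2"
  define B where "B = a + b + 4 - 10 * T1 + 5 * T1^3"
  define P where "P = T1^2 + T1 - 1"
  obtain t where t: "t ^ 2 = (T1 - 2) / A" using nth_root_exists[of 2] by auto
  have nonzero: "A \<noteq> 0" "P \<noteq> 0" "T1 - 2 \<noteq> 0"
    using transcendental_over_quadratic_nonzero[OF T1_trans k_field, of "- b - 2" 5 0]
      transcendental_over_quadratic_nonzero[OF T1_trans k_field, of "- 1" 1 1]
      transcendental_over_quadratic_nonzero[OF T1_trans k_field, of "- 2" 1 0]
    unfolding A_def P_def using k_field ab by (auto simp: subfield_closed algebra_simps)
  have curve': "A * w^4 + B * w^2 + (T1 - 2) * P^2 = 0"
    using curve unfolding curveD_biquadratic A_def B_def P_def .
  moreover have "A * (P * t)^2 = (T1 - 2) * P^2"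
    using t nonzero(1) by (simp add: power_mult_distrib)
  ultimately have root: "A * w^4 + B * w^2 + A * (P * t)^2 = 0" by simp
  have w0: "w \<noteq> 0" using curve' nonzero(2,3) by auto
  have coeffs: "A \<in> ?F" "B \<in> ?F" "P \<in> ?F" "t^2 \<in> ?F"
  proof -
    have "subfield ?F" "a \<in> ?F" "b \<in> ?F" "T1 \<in> ?F"
      using gen_field_subfield gen_field_subset[of "k \<union> {T1}"] ab by auto
    then show "A \<in> ?F" "B \<in> ?F" "P \<in> ?F" "t^2 \<in> ?F"
      unfolding t A_def B_def P_def by (auto intro!: subfield_closed)
  qed
  have "insert w (k \<union> {T1}) = k \<union> {T1, w}" "insert t (k \<union> {T1, w}) = k \<union> {T1, w, t}"
    by auto
  note closure = galois_closure_biquadratic[OF coeffs nonzero(1,2) w0 root, unfolded this]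
  show ?thesis
    using closure[OF not_galois] t unfolding A_def by blast
qed

end
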